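(* Let $X$ be a real Hilbert space, $f:X\to\mathbb{R}\cup\{+\infty\}$ a proper $\Phi_{lsc}$-convex function and $\bar x\in\mathrm{dom}(f)$. If $f$ is prox-regular at $\bar x$ for $\bar v\in\partial f(\bar x)$, then there exists $\bar a\ge0$ such that $(\bar a,\ \bar v+2\bar a\bar x)\in\partial_{lsc}f(\bar x)$; in particular $\partial_{lsc}f(\bar x)\ne\emptyset$.
   Context: $\Phi_{lsc}$ is the class of functions $\varphi(x)=-a\|x\|^2+\langle v,x\rangle+c$ ($a\ge0$, $v\in X^*$, $c\in\mathbb{R}$); $f$ is $\Phi_{lsc}$-convex if it is the pointwise supremum of the $\varphi\in\Phi_{lsc}$ with $\varphi\le f$; proper means at least one such $\varphi$ exists and $\mathrm{dom}(f)\ne\emptyset$. $\partial_{lsc}f(\bar x)$ is the set of $(a,v)\in\mathbb{R}_+\times X^*$ with $f(x)-f(\bar x)\ge\langle v,x-\bar x\rangle-a\|x\|^2+a\|\bar x\|^2$ for all $x\in X$. $\partial f(\bar x)$ denotes the limiting (Mordukhovich) subdifferential. $f$ is prox-regular at $\bar x$ for $\bar v\in\partial f(\bar x)$ if there exist $\rho>0$, $\varepsilon>0$ such that for all $x,x'$ with $\|x-\bar x\|<\varepsilon$, $\|x'-\bar x\|<\varepsilon$, $|f(x)-f(\bar x)|<\varepsilon$, and all $v\in\partial f(x)$ with $\|v-\bar v\|<\varepsilon$, one has $f(x')\ge f(x)+\langle v,x'-x\rangle-\tfrac12\rho\|x'-x\|^2$. *)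

theory Defs
  imports "HOL-Analysis.Analysis"
begin

text \<open>The dual X* is identified with X via the Riesz representation (inner product).\<close>

definition phi_lsc :: "real \<Rightarrow> 'a::real_inner \<Rightarrow> real \<Rightarrow> 'a \<Rightarrow> real" where
  "phi_lsc a v c x = - a * (norm x)^2 + inner v x + c"

definition Phi_lsc :: "('a::real_inner \<Rightarrow> real) set" where
  "Phi_lsc = {phi_lsc a v c | a v c. a \<ge> 0}"

definition minorants_lsc :: "('a::real_inner \<Rightarrow> ereal) \<Rightarrow> ('a \<Rightarrow> real) set" where
  "minorants_lsc f = {\<phi> \<in> Phi_lsc. \<forall>x. ereal (\<phi> x) \<le> f x}"

definition Phi_lsc_convex :: "('a::real_inner \<Rightarrow> ereal) \<Rightarrow> bool" where
  "Phi_lsc_convex f \<longleftrightarrow> (\<forall>x. f x = (SUP \<phi>\<in>minorants_lsc f. ereal (\<phi> x)))"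

definition edom :: "('a \<Rightarrow> ereal) \<Rightarrow> 'a set" where
  "edom f = {x. f x < \<infinity>}"

definition Phi_lsc_proper :: "('a::real_inner \<Rightarrow> ereal) \<Rightarrow> bool" where
  "Phi_lsc_proper f \<longleftrightarrow> minorants_lsc f \<noteq> {} \<and> edom f \<noteq> {}"

definition lsc_subdiff :: "('a::real_inner \<Rightarrow> ereal) \<Rightarrow> 'a \<Rightarrow> (real \<times> 'a) set" where
  "lsc_subdiff f xb = {(a, v). a \<ge> 0 \<and>
     (\<forall>x. f x \<ge> f xb + ereal (inner v (x - xb) - a * (norm x)^2 + a * (norm xb)^2))}"

definition frechet_subdiff :: "('a::real_inner \<Rightarrow> ereal) \<Rightarrow> 'a \<Rightarrow> 'a set" where
  "frechet_subdiff f x = {v. \<bar>f x\<bar> \<noteq> \<infinity> \<and>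
     (\<forall>e>0. \<exists>d>0. \<forall>y. norm (y - x) < d \<longrightarrow>
        f y \<ge> f x + ereal (inner v (y - x) - e * norm (y - x)))}"

definition weak_conv :: "(nat \<Rightarrow> 'a::real_inner) \<Rightarrow> 'a \<Rightarrow> bool" where
  "weak_conv u v \<longleftrightarrow> (\<forall>y. (\<lambda>k. inner (u k) y) \<longlonglongrightarrow> inner v y)"

definition limiting_subdiff :: "('a::real_inner \<Rightarrow> ereal) \<Rightarrow> 'a \<Rightarrow> 'a set" where
  "limiting_subdiff f x = {v. \<bar>f x\<bar> \<noteq> \<infinity> \<and>
     (\<exists>xs vs. xs \<longlonglongrightarrow> x \<and> (\<lambda>k. f (xs k)) \<longlonglongrightarrow> f x \<and>
        (\<forall>k. vs k \<in> frechet_subdiff f (xs k)) \<and> weak_conv vs v)}"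

definition prox_regular :: "('a::real_inner \<Rightarrow> ereal) \<Rightarrow> 'a \<Rightarrow> 'a \<Rightarrow> bool" where
  "prox_regular f xb vb \<longleftrightarrow> vb \<in> limiting_subdiff f xb \<and>
     (\<exists>\<rho>>0. \<exists>\<epsilon>>0. \<forall>x x' v.
        norm (x - xb) < \<epsilon> \<longrightarrow> norm (x' - xb) < \<epsilon> \<longrightarrow> \<bar>f x - f xb\<bar> < ereal \<epsilon> \<longrightarrow>
        v \<in> limiting_subdiff f x \<longrightarrow> norm (v - vb) < \<epsilon> \<longrightarrow>
        f x' \<ge> f x + ereal (inner v (x' - x) - \<rho> / 2 * (norm (x' - x))^2))"

end

theory Submission
  imports Defs
begin

text \<open>Prox-regularity at \<open>xb\<close> for \<open>vb\<close>, applied with \<open>x = xb\<close> and \<open>v = vb\<close>, says that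
  \<open>f \<ge> f xb + \<langle>vb, \<cdot> - xb\<rangle> - \<rho>/2 \<parallel>\<cdot> - xb\<parallel>\<^sup>2\<close> near \<open>xb\<close>. Away from \<open>xb\<close> any minorant
  \<open>-a\<^sub>0\<parallel>x\<parallel>\<^sup>2 + \<langle>w, x\<rangle> + c\<close> of \<open>f\<close> (which exists by properness) dominates
  \<open>f xb + \<langle>vb, x - xb\<rangle> - a\<parallel>x - xb\<parallel>\<^sup>2\<close> once \<open>a\<close> is large, since the difference is a quadratic
  in \<open>\<parallel>x - xb\<parallel>\<close> with leading coefficient \<open>a - a\<^sub>0\<close>. Hence for \<open>a\<close> large this quadratic is a
  global minorant of \<open>f\<close> touching it at \<open>xb\<close>, and expanding \<open>\<parallel>x - xb\<parallel>\<^sup>2\<close> turns it into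
  \<open>(a, vb + 2a xb) \<in> \<partial>\<^sub>l\<^sub>s\<^sub>c f xb\<close>.\<close>

lemma quadratic_nonneg_beyond:
  fixes B n K t e :: real
  assumes "e > 0" "e \<le> t" "n \<ge> 0" "(n * e + \<bar>K\<bar>) / e\<^sup>2 \<le> B"
  shows "0 \<le> B * t\<^sup>2 - n * t + K"
proof -
  have ratio: "1 \<le> t / e" using assms by simp
  have "n * t + \<bar>K\<bar> \<le> n * t * (t / e) + \<bar>K\<bar> * (t / e)\<^sup>2"
  proof -
    have "n * t * 1 \<le> n * t * (t / e)"
      using ratio assms by (intro mult_left_mono) auto
    moreover have "\<bar>K\<bar> \<le> \<bar>K\<bar> * (t / e)\<^sup>2"
      using ratio by (simp add: mult_le_cancel_left1 one_le_power)
    ultimately show ?thesis by linarith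
  qed
  also have "\<dots> = (n * e + \<bar>K\<bar>) / e\<^sup>2 * t\<^sup>2"
    using assms by (simp add: field_simps power2_eq_square)
  also have "\<dots> \<le> B * t\<^sup>2"
    using assms by (intro mult_right_mono) auto
  finally show ?thesis by linarith
qed

lemma phi_lsc_shift:
  "phi_lsc a w c (x + h) = phi_lsc a w c x + inner (w - (2 * a) *\<^sub>R x) h - a * (norm h)\<^sup>2"
  unfolding phi_lsc_def power2_norm_eq_inner
  by (simp add: inner_add_left inner_add_right inner_diff_left algebra_simps inner_commute)

lemma phi_lsc_above_quadratic_far:
  fixes xb v w :: "'a::real_inner"
  assumes "\<epsilon> > 0"
  obtains A where "\<And>a x. A \<le> a \<Longrightarrow> \<epsilon> \<le> norm (x - xb) \<Longrightarrow>
    r + inner v (x - xb) - a * (norm (x - xb))\<^sup>2 \<le> phi_lsc a0 w c x"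
proof
  define u where "u = w - (2 * a0) *\<^sub>R xb - v"
  define K where "K = phi_lsc a0 w c xb - r"
  fix a x
  assume a: "a0 + (norm u * \<epsilon> + \<bar>K\<bar>) / \<epsilon>\<^sup>2 \<le> a" and far: "\<epsilon> \<le> norm (x - xb)"
  define h where "h = x - xb"
  have "0 \<le> (a - a0) * (norm h)\<^sup>2 - norm u * norm h + K"
    using quadratic_nonneg_beyond[OF assms _ _, of "norm h" "norm u" K "a - a0"] a far
    unfolding h_def by simp
  moreover have "- (norm u * norm h) \<le> inner u h"
    using Cauchy_Schwarz_ineq2[of u h] by linarith
  moreover have "phi_lsc a0 w c x = phi_lsc a0 w c xb + inner (w - (2 * a0) *\<^sub>R xb) h - a0 * (norm h)\<^sup>2"
    using phi_lsc_shift[of a0 w c xb h] unfolding h_def by simp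
  ultimately show "r + inner v (x - xb) - a * (norm (x - xb))\<^sup>2 \<le> phi_lsc a0 w c x"
    unfolding u_def K_def h_def by (simp add: inner_diff_left algebra_simps)
qed

lemma prox_regular_local_quadratic_minorant:
  assumes "prox_regular f xb vb"
  obtains \<rho> \<epsilon> where "\<rho> > 0" "\<epsilon> > 0"
    "\<And>x. norm (x - xb) < \<epsilon> \<Longrightarrow>
       f xb + ereal (inner vb (x - xb) - \<rho> / 2 * (norm (x - xb))\<^sup>2) \<le> f x"
proof -
  have vb: "vb \<in> limiting_subdiff f xb"
    using assms unfolding prox_regular_def by blast
  then have finite: "\<bar>f xb\<bar> \<noteq> \<infinity>"
    unfolding limiting_subdiff_def by simp
  obtain \<rho> \<epsilon> where "\<rho> > 0" "\<epsilon> > 0" and PR: "\<forall>x x' v.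
      norm (x - xb) < \<epsilon> \<longrightarrow> norm (x' - xb) < \<epsilon> \<longrightarrow> \<bar>f x - f xb\<bar> < ereal \<epsilon> \<longrightarrow>
      v \<in> limiting_subdiff f x \<longrightarrow> norm (v - vb) < \<epsilon> \<longrightarrow>
      f x' \<ge> f x + ereal (inner v (x' - x) - \<rho> / 2 * (norm (x' - x))\<^sup>2)"
    using assms unfolding prox_regular_def by blast
  moreover have "\<bar>f xb - f xb\<bar> < ereal \<epsilon>"
    using finite \<open>\<epsilon> > 0\<close> by (cases "f xb") auto
  ultimately show ?thesis
    using that[of \<rho> \<epsilon>] vb by (simp add: PR)
qed

lemma lsc_subdiff_of_quadratic_minorant:
  assumes "a \<ge> 0"
    and "\<And>x. f xb + ereal (inner v (x - xb) - a * (norm (x - xb))\<^sup>2) \<le> f x"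
  shows "(a, v + (2 * a) *\<^sub>R xb) \<in> lsc_subdiff f xb"
proof -
  have "inner (v + (2 * a) *\<^sub>R xb) (x - xb) - a * (norm x)\<^sup>2 + a * (norm xb)\<^sup>2
      = inner v (x - xb) - a * (norm (x - xb))\<^sup>2" for x
    unfolding power2_norm_eq_inner
    by (simp add: inner_add_left inner_diff_left inner_diff_right algebra_simps inner_commute)
  then show ?thesis
    using assms unfolding lsc_subdiff_def by simp
qed

lemma prox_regular_global_quadratic_minorant:
  assumes "Phi_lsc_proper f" "prox_regular f xb vb"
  obtains a where "a \<ge> 0"
    "\<And>x. f xb + ereal (inner vb (x - xb) - a * (norm (x - xb))\<^sup>2) \<le> f x"
proof -
  obtain r where r: "f xb = ereal r"
    using assms(2) unfolding prox_regular_def limiting_subdiff_def by (cases "f xb") auto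
  obtain \<rho> \<epsilon> where "\<rho> > 0" "\<epsilon> > 0" and near: "\<And>x. norm (x - xb) < \<epsilon> \<Longrightarrow>
      f xb + ereal (inner vb (x - xb) - \<rho> / 2 * (norm (x - xb))\<^sup>2) \<le> f x"
    using prox_regular_local_quadratic_minorant[OF assms(2)] by blast
  obtain a0 w c where minorant: "\<And>x. ereal (phi_lsc a0 w c x) \<le> f x"
    using assms(1) unfolding Phi_lsc_proper_def minorants_lsc_def Phi_lsc_def by blast
  obtain A where far: "\<And>a x. A \<le> a \<Longrightarrow> \<epsilon> \<le> norm (x - xb) \<Longrightarrow>
      r + inner vb (x - xb) - a * (norm (x - xb))\<^sup>2 \<le> phi_lsc a0 w c x"
    using phi_lsc_above_quadratic_far[OF \<open>\<epsilon> > 0\<close>] by blast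
  define a where "a = max (\<rho> / 2) A"
  have "f xb + ereal (inner vb (x - xb) - a * (norm (x - xb))\<^sup>2) \<le> f x" for x
  proof (cases "norm (x - xb) < \<epsilon>")
    case True
    have "a * (norm (x - xb))\<^sup>2 \<ge> \<rho> / 2 * (norm (x - xb))\<^sup>2"
      unfolding a_def by (intro mult_right_mono) auto
    then have "f xb + ereal (inner vb (x - xb) - a * (norm (x - xb))\<^sup>2)
        \<le> f xb + ereal (inner vb (x - xb) - \<rho> / 2 * (norm (x - xb))\<^sup>2)"
      unfolding r by simp
    then show ?thesis using near[OF True] by order
  next
    case False
    then have "r + (inner vb (x - xb) - a * (norm (x - xb))\<^sup>2) \<le> phi_lsc a0 w c x"
      using far[of a x] unfolding a_def by simp
    then show ?thesis
      using minorant[of x] unfolding r by (metis ereal_less_eq(3) order_trans plus_ereal.simps(1))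
  qed
  moreover have "a \<ge> 0" unfolding a_def using \<open>\<rho> > 0\<close> by simp
  ultimately show ?thesis using that by blast
qed

theorem mainTheorem9:
  fixes f :: "'a::{real_inner, complete_space} \<Rightarrow> ereal"
    and xb vb :: 'a
  assumes "\<forall>x. f x \<noteq> -\<infinity>"
    and "Phi_lsc_proper f"
    and "Phi_lsc_convex f"
    and "xb \<in> edom f"
    and "vb \<in> limiting_subdiff f xb"
    and "prox_regular f xb vb"
  shows "\<exists>ab\<ge>0. (ab, vb + (2 * ab) *\<^sub>R xb) \<in> lsc_subdiff f xb \<and> lsc_subdiff f xb \<noteq> {}"
proof -
  obtain a where "a \<ge> 0"
    "\<And>x. f xb + ereal (inner vb (x - xb) - a * (norm (x - xb))\<^sup>2) \<le> f x"
    using prox_regular_global_quadratic_minorant[OF assms(2,6)] by blast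
  then have "(a, vb + (2 * a) *\<^sub>R xb) \<in> lsc_subdiff f xb"
    by (rule lsc_subdiff_of_quadratic_minorant)
  with \<open>a \<ge> 0\<close> show ?thesis by blast
qed

end
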